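(* Let $q\ge 2$, $n$, $r\ge 1$, $\rho\ge 2$ and $d\ge 1$ be integers, and put $N=r+\rho-1$. Let $B(l,\rho)$, $l=0,1,2,\dots$, be a function with the following properties: (i) for every $l$, every $q$-ary code of length $l$ with minimum Hamming distance at least $\rho$ has at most $B(l,\rho)$ codewords; (ii) $B(0,\rho)=1$; (iii) $B(\cdot,\rho)$ is log-convex in $l$. Let $\mathcal{C}$ be a $q$-ary $(n,k,r,\rho)$ LRC code with minimum distance $d$, and let $$\mu=\mu(n,d,r,\rho):=\Big\lceil \frac{n-(d-1)}{N}\Big\rceil+1 .$$ Then $$k\le \mu\,\log_q B(N,\rho).$$
   Context: A $q$-ary code of length $n$ is a subset $\mathcal{C}\subseteq Q^n$ of a set $Q$ with $|Q|=q$; its minimum distance is the minimum Hamming distance between distinct codewords, and its dimension is $k=\log_q|\mathcal{C}|$ (not necessarily an integer). For $I\subseteq[n]=\{1,\dots,n\}$, $\mathcal{C}_I$ denotes the restriction (projection) of $\mathcal{C}$ to the coordinates in $I$. The code $\mathcal{C}$ of cardinality $q^k$ is an $(n,k,r,\rho)$ LRC code (has the $(\rho,r)$ locality property), $\rho\ge 2$, if every coordinate $i\in[n]$ is contained in a subset $\mathcal{R}_i\subseteq[n]$ of size at most $r+\rho-1$ such that the restricted code $\mathcal{C}_{\mathcal{R}_i}$ has minimum distance at least $\rho$. A positive function $f(j)$ of an integer argument is log-convex if $f(j_1)f(j_2)\le f(j_1-1)f(j_2+1)$ for all $j_1\le j_2$ in the support of $f$. *)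

theory Defs
  imports Complex_Main "HOL-Library.FuncSet"
begin

text \<open>Words of length n over alphabet Q are functions on the coordinate set {1..n}
  (extensional: undefined outside). A q-ary code of length n over Q is a subset of
  words of length n over Q.\<close>

definition is_code :: "'a set \<Rightarrow> nat \<Rightarrow> (nat \<Rightarrow> 'a) set \<Rightarrow> bool" where
  "is_code Q n C \<longleftrightarrow> C \<subseteq> PiE {1..n} (\<lambda>_. Q)"

definition hamming :: "nat set \<Rightarrow> (nat \<Rightarrow> 'a) \<Rightarrow> (nat \<Rightarrow> 'a) \<Rightarrow> nat" where
  "hamming I x y = card {i \<in> I. x i \<noteq> y i}"

definition proj :: "(nat \<Rightarrow> 'a) set \<Rightarrow> nat set \<Rightarrow> (nat \<Rightarrow> 'a) set" where
  "proj C I = (\<lambda>x. restrict x I) ` C"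

definition min_dist_ge :: "nat set \<Rightarrow> (nat \<Rightarrow> 'a) set \<Rightarrow> nat \<Rightarrow> bool" where
  "min_dist_ge I C \<rho> \<longleftrightarrow> (\<forall>x\<in>C. \<forall>y\<in>C. x \<noteq> y \<longrightarrow> hamming I x y \<ge> \<rho>)"

definition min_dist_eq :: "nat set \<Rightarrow> (nat \<Rightarrow> 'a) set \<Rightarrow> nat \<Rightarrow> bool" where
  "min_dist_eq I C d \<longleftrightarrow> min_dist_ge I C d \<and>
     (\<exists>x\<in>C. \<exists>y\<in>C. x \<noteq> y \<and> hamming I x y = d)"

definition has_locality :: "nat \<Rightarrow> (nat \<Rightarrow> 'a) set \<Rightarrow> nat \<Rightarrow> nat \<Rightarrow> bool" where
  "has_locality n C r \<rho> \<longleftrightarrow>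
     (\<forall>i\<in>{1..n}. \<exists>R. R \<subseteq> {1..n} \<and> i \<in> R \<and> card R \<le> r + \<rho> - 1 \<and>
        min_dist_ge R (proj C R) \<rho>)"

definition log_convex :: "(nat \<Rightarrow> real) \<Rightarrow> bool" where
  "log_convex f \<longleftrightarrow> (\<forall>l. f l > 0) \<and>
     (\<forall>j1 j2. 1 \<le> j1 \<longrightarrow> j1 \<le> j2 \<longrightarrow> f j1 * f j2 \<le> f (j1 - 1) * f (j2 + 1))"

end

theory Submission
  imports Defs
begin

text \<open>Grow a coordinate set \<open>U\<close> greedily: while \<open>|U| \<le> n - d\<close>, add the recovery set \<open>R\<close>
  of a coordinate outside \<open>U\<close>. Among codewords with fixed values on \<open>U\<close>, the coordinates
  \<open>R - U\<close> carry a code of minimum distance \<open>\<rho>\<close>, so the projection grows by a factor at most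
  \<open>B |R - U|\<close>; log-convexity together with \<open>B 0 = 1\<close> gives \<open>B s ^ N \<le> B N ^ s\<close> for \<open>s \<le> N\<close>.
  Hence \<open>|C\<^sub>U| ^ N \<le> B N ^ |U|\<close> is maintained. Once \<open>|U| > n - d\<close>, the projection onto \<open>U\<close>
  is injective on \<open>C\<close>, while \<open>|U| \<le> n - d + N\<close>.\<close>

definition code_size_bound :: "'a set \<Rightarrow> nat \<Rightarrow> (nat \<Rightarrow> real) \<Rightarrow> bool" where
  "code_size_bound Q \<rho> B \<longleftrightarrow>
     (\<forall>l D. is_code Q l D \<and> min_dist_ge {1..l} D \<rho> \<longrightarrow> real (card D) \<le> B l)"

lemma code_size_boundD:
  "code_size_bound Q \<rho> B \<Longrightarrow> is_code Q l D \<Longrightarrow> min_dist_ge {1..l} D \<rho> \<Longrightarrow> real (card D) \<le> B l"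
  unfolding code_size_bound_def by blast

lemma card_le_bound_of_min_dist_ge:
  fixes Q :: "'a set" and S :: "nat set" and D :: "(nat \<Rightarrow> 'a) set" and B :: "nat \<Rightarrow> real"
  assumes fin: "finite S" and DS: "D \<subseteq> PiE S (\<lambda>_. Q)" and md: "min_dist_ge S D \<rho>"
    and bound: "code_size_bound Q \<rho> B"
  shows "real (card D) \<le> B (card S)"
proof -
  obtain h where h: "bij_betw h {1..card S} S" using ex_bij_betw_nat_finite_1[OF fin] by blast
  define T where "T = (\<lambda>x::nat\<Rightarrow>'a. restrict (x \<circ> h) {1..card S})"
  have h_into: "h j \<in> S" if "j \<in> {1..card S}" for j using h that by (auto simp: bij_betw_def)
  have h_onto: "\<exists>j\<in>{1..card S}. h j = i" if "i \<in> S" for i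
    using h that unfolding bij_betw_def by (metis imageE)
  have inj: "inj_on T D"
  proof
    fix x y assume xy: "x \<in> D" "y \<in> D" "T x = T y"
    show "x = y"
    proof
      fix i show "x i = y i"
      proof (cases "i \<in> S")
        case True
        then obtain j where "j \<in> {1..card S}" "h j = i" using h_onto by blast
        with fun_cong[OF xy(3), of j] show ?thesis by (simp add: T_def)
      next
        case False
        then show ?thesis using xy DS by (metis PiE_E subsetD)
      qed
    qed
  qed
  have code: "is_code Q (card S) (T ` D)"
    unfolding is_code_def using DS h_into by (auto simp: T_def PiE_def Pi_def)
  have hamming_T: "hamming {1..card S} (T x) (T y) = hamming S x y" for x y
  proof -
    have "{i \<in> S. x i \<noteq> y i} = h ` {j \<in> {1..card S}. T x j \<noteq> T y j}"
      using h_into h_onto by (force simp: T_def)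
    moreover have "inj_on h {j \<in> {1..card S}. T x j \<noteq> T y j}"
      using h by (auto simp: bij_betw_def intro: inj_on_subset)
    ultimately show ?thesis unfolding hamming_def by (simp add: card_image)
  qed
  have "min_dist_ge {1..card S} (T ` D) \<rho>"
    using md[unfolded min_dist_ge_def] hamming_T unfolding min_dist_ge_def by (metis imageE)
  from code_size_boundD[OF bound code this] show ?thesis using card_image[OF inj] by simp
qed

lemma bound_nonneg:
  fixes Q :: "'a set" and B :: "nat \<Rightarrow> real"
  assumes bound: "code_size_bound Q \<rho> B"
  shows "B l \<ge> 0"
proof -
  have "real (card ({} :: (nat \<Rightarrow> 'a) set)) \<le> B l"
    by (rule code_size_boundD[OF bound]) (auto simp: is_code_def min_dist_ge_def)
  then show ?thesis by simp
qed

lemma bound_ge_one: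
  fixes Q :: "'a set" and B :: "nat \<Rightarrow> real"
  assumes "Q \<noteq> {}"
    and bound: "code_size_bound Q \<rho> B"
  shows "B l \<ge> 1"
proof -
  have "real (card {restrict (\<lambda>_. SOME a. a \<in> Q) {1..l}}) \<le> B l"
    using assms(1) by (intro code_size_boundD[OF bound]) (auto simp: is_code_def min_dist_ge_def some_in_eq)
  then show ?thesis by simp
qed

lemma card_proj_Un_le:
  fixes Q :: "'a set" and C :: "(nat \<Rightarrow> 'a) set" and B :: "nat \<Rightarrow> real"
  assumes CQ: "C \<subseteq> PiE {1..n} (\<lambda>_. Q)" and finQ: "finite Q"
    and R: "R \<subseteq> {1..n}" and mdR: "min_dist_ge R (proj C R) \<rho>"
    and bound: "code_size_bound Q \<rho> B"
  shows "real (card (proj C (U \<union> R))) \<le> real (card (proj C U)) * B (card (R - U))"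
proof -
  define S where "S = R - U"
  have finC: "finite C" using CQ finQ by (meson finite_PiE finite_atLeastAtMost finite_subset)
  define fiber where "fiber p = (\<lambda>c. restrict c (U \<union> R)) ` {c\<in>C. restrict c U = p}" for p
  define D where "D p = (\<lambda>c. restrict c S) ` {c\<in>C. restrict c U = p}" for p
  have fiber_D: "card (fiber p) \<le> card (D p)" for p
  proof -
    define extend where "extend z = (\<lambda>i. if i \<in> U then p i else z i)" for z :: "nat \<Rightarrow> 'a"
    have "fiber p = extend ` D p"
      unfolding fiber_def D_def extend_def S_def image_image
      by (intro image_cong refl) (auto simp: restrict_def fun_eq_iff, metis)
    moreover have "finite (D p)" using finC unfolding D_def by simp
    ultimately show ?thesis by (simp add: card_image_le)
  qed
  have D_B: "real (card (D p)) \<le> B (card S)" for p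
  proof (rule card_le_bound_of_min_dist_ge[OF _ _ _ bound])
    show "finite S" unfolding S_def using R by (meson finite_Diff finite_atLeastAtMost finite_subset)
    show "D p \<subseteq> PiE S (\<lambda>_. Q)" unfolding D_def using CQ R by (auto simp: PiE_def Pi_def S_def subset_iff)
    show "min_dist_ge S (D p) \<rho>" unfolding min_dist_ge_def
    proof (intro ballI impI)
      fix a b assume "a \<in> D p" "b \<in> D p" "a \<noteq> b"
      then obtain c c' where cc: "c \<in> C" "c' \<in> C" "restrict c U = p" "restrict c' U = p"
        "a = restrict c S" "b = restrict c' S" unfolding D_def by blast
      have agree: "c i = c' i" if "i \<in> U" for i using cc(3,4) that by (metis restrict_apply')
      have "restrict c R \<noteq> restrict c' R"
        using \<open>a \<noteq> b\<close> cc(5,6) unfolding S_def by (auto simp: fun_eq_iff restrict_def split: if_splits)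
      then have "\<rho> \<le> hamming R (restrict c R) (restrict c' R)"
        using mdR cc(1,2) unfolding min_dist_ge_def proj_def by blast
      also have "hamming R (restrict c R) (restrict c' R) = hamming S a b"
        unfolding hamming_def cc(5,6) S_def using agree by (intro arg_cong[where f=card]) auto
      finally show "\<rho> \<le> hamming S a b" .
    qed
  qed
  have "proj C (U \<union> R) = (\<Union>p\<in>proj C U. fiber p)"
    unfolding proj_def fiber_def by auto
  then have "card (proj C (U \<union> R)) \<le> (\<Sum>p\<in>proj C U. card (fiber p))"
    using finC by (metis card_UN_le finite_imageI proj_def)
  then have "real (card (proj C (U \<union> R))) \<le> (\<Sum>p\<in>proj C U. real (card (fiber p)))"
    by (metis of_nat_le_iff of_nat_sum)
  also have "\<dots> \<le> (\<Sum>p\<in>proj C U. B (card S))"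
    by (intro sum_mono) (meson D_B fiber_D of_nat_le_iff order_trans)
  finally show ?thesis unfolding S_def by simp
qed

lemma midpoint_convex_chord_le:
  fixes g :: "nat \<Rightarrow> real"
  assumes g0: "g 0 = 0" and convex: "\<And>j. j \<ge> 1 \<Longrightarrow> 2 * g j \<le> g (j - 1) + g (j + 1)"
    and "s \<le> N"
  shows "real N * g s \<le> real s * g N"
proof -
  define \<Delta> where "\<Delta> j = g (Suc j) - g j" for j
  have \<Delta>_Suc: "\<Delta> j \<le> \<Delta> (Suc j)" for j using convex[of "Suc j"] by (simp add: \<Delta>_def)
  have \<Delta>_mono: "\<Delta> i \<le> \<Delta> j" if "i \<le> j" for i j
    using that by (induction j rule: dec_induct) (auto intro: order_trans \<Delta>_Suc)
  have g_le: "g s \<le> real s * \<Delta> s" for s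
  proof (induction s)
    case (Suc s)
    have "g (Suc s) = g s + \<Delta> s" by (simp add: \<Delta>_def)
    also have "\<dots> \<le> (real s + 1) * \<Delta> s" using Suc by (simp add: algebra_simps)
    also have "\<dots> \<le> (real s + 1) * \<Delta> (Suc s)" using \<Delta>_Suc[of s] by (intro mult_left_mono) auto
    finally show ?case by (simp add: add.commute)
  qed (simp add: g0)
  show ?thesis
    using \<open>s \<le> N\<close>
  proof (induction N rule: dec_induct)
    case (step N)
    have "g s \<le> real s * \<Delta> N"
      using g_le[of s] \<Delta>_mono[OF step(1)] by (meson mult_left_mono of_nat_0_le_iff order_trans)
    then have "real (Suc N) * g s \<le> real s * g N + real s * \<Delta> N" using step(3) by (simp add: algebra_simps)
    also have "\<dots> = real s * g (Suc N)" by (simp add: \<Delta>_def algebra_simps)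
    finally show ?case .
  qed simp
qed

lemma log_convex_pow_le:
  assumes B_lc: "log_convex B" and B0: "B 0 = 1" and "s \<le> N"
  shows "B s ^ N \<le> B N ^ s"
proof -
  have pos: "B l > 0" for l using B_lc unfolding log_convex_def by blast
  define g where "g l = ln (B l)" for l
  have "2 * g j \<le> g (j - 1) + g (j + 1)" if "j \<ge> 1" for j
  proof -
    have "B j * B j \<le> B (j - 1) * B (j + 1)" using B_lc that unfolding log_convex_def by blast
    then have "ln (B j * B j) \<le> ln (B (j - 1) * B (j + 1))" using pos by simp
    then show ?thesis using pos[of j] pos[of "j - 1"] pos[of "j + 1"] by (simp only: g_def ln_mult) simp
  qed
  then have "real N * g s \<le> real s * g N"
    using midpoint_convex_chord_le[of g] \<open>s \<le> N\<close> by (simp add: g_def B0)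
  then show ?thesis using pos by (simp add: g_def ln_realpow flip: ln_le_cancel_iff)
qed

lemma exists_coordinate_set_bounded_proj:
  fixes Q :: "'a set" and C :: "(nat \<Rightarrow> 'a) set" and B :: "nat \<Rightarrow> real"
  assumes finQ: "finite Q" and code: "is_code Q n C" and loc: "has_locality n C r \<rho>"
    and N: "N = r + \<rho> - 1"
    and bound: "code_size_bound Q \<rho> B"
    and B_pow: "\<And>s. s \<le> N \<Longrightarrow> B s ^ N \<le> B N ^ s"
    and "k \<le> n"
  shows "\<exists>U. U \<subseteq> {1..n} \<and> k \<le> card U \<and> card U \<le> k + N - 1 \<and>
           real (card (proj C U)) ^ N \<le> B N ^ card U"
  using \<open>k \<le> n\<close>
proof (induction k)
  case 0
  have "B N \<ge> 0" by (rule bound_nonneg[OF bound])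
  moreover have "proj C {} \<subseteq> {\<lambda>_. undefined}" unfolding proj_def by auto
  then have "card (proj C {}) \<le> card {\<lambda>_::nat. undefined :: 'a}" by (intro card_mono) auto
  ultimately show ?case by (intro exI[of _ "{}"]) (simp add: power_le_one)
next
  case (Suc k)
  then obtain U where U: "U \<subseteq> {1..n}" "k \<le> card U" "card U \<le> k + N - 1"
    "real (card (proj C U)) ^ N \<le> B N ^ card U" by auto
  show ?case
  proof (cases "Suc k \<le> card U")
    case True then show ?thesis using U by (intro exI[of _ U]) auto
  next
    case False
    then have card_U: "card U = k" using U(2) by simp
    with Suc.prems have "U \<noteq> {1..n}" by auto
    with U(1) obtain i where i: "i \<in> {1..n}" "i \<notin> U" by blast
    obtain R where R: "R \<subseteq> {1..n}" "i \<in> R" "card R \<le> N" "min_dist_ge R (proj C R) \<rho>"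
      using loc i(1) N unfolding has_locality_def by blast
    define s where "s = card (R - U)"
    have finR: "finite R" using R(1) finite_subset by blast
    have "card (U \<union> (R - U)) = card U + s"
      unfolding s_def by (rule card_Un_disjoint) (use U(1) finR finite_subset in auto)
    then have card_UR: "card (U \<union> R) = card U + s" by simp
    have "1 \<le> s" using i R(2) finR by (auto simp: s_def Suc_le_eq card_gt_0_iff)
    have "s \<le> N" using R(3) card_mono[OF finR, of "R - U"] by (auto simp: s_def)
    have B_nonneg: "B l \<ge> 0" for l by (rule bound_nonneg[OF bound])
    have "real (card (proj C (U \<union> R))) ^ N \<le> (real (card (proj C U)) * B s) ^ N"
      using card_proj_Un_le[OF _ finQ R(1) R(4) bound, where U=U] code
      by (intro power_mono) (auto simp: is_code_def s_def)
    also have "\<dots> = real (card (proj C U)) ^ N * B s ^ N" by (simp add: power_mult_distrib)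
    also have "\<dots> \<le> B N ^ card U * B N ^ s"
      using U(4) B_pow[OF \<open>s \<le> N\<close>] B_nonneg by (intro mult_mono) auto
    also have "\<dots> = B N ^ card (U \<union> R)" by (simp add: card_UR power_add)
    finally show ?thesis
      using U(1) R(1) card_UR card_U \<open>1 \<le> s\<close> \<open>s \<le> N\<close> by (intro exI[of _ "U \<union> R"]) auto
  qed
qed

lemma inj_on_restrict_if_min_dist_ge:
  assumes "min_dist_ge {1..n} C d" and "U \<subseteq> {1..n}" and "n < card U + d"
  shows "inj_on (\<lambda>c. restrict c U) C"
proof
  fix c c' assume cc: "c \<in> C" "c' \<in> C" "restrict c U = restrict c' U"
  have "{i \<in> {1..n}. c i \<noteq> c' i} \<subseteq> {1..n} - U"
    using cc(3) by (auto dest: fun_cong simp: restrict_def split: if_splits)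
  then have "hamming {1..n} c c' \<le> card ({1..n} - U)"
    unfolding hamming_def by (intro card_mono) auto
  also have "\<dots> = n - card U" using assms(2) by (simp add: card_Diff_subset finite_subset)
  finally have "hamming {1..n} c c' < d"
    using assms(3) card_mono[OF finite_atLeastAtMost assms(2)] by simp
  then show "c = c'" using assms(1) cc(1,2) unfolding min_dist_ge_def by fastforce
qed

lemma min_dist_eq_imp_le_length:
  assumes "min_dist_eq {1..n} C d"
  shows "d \<le> n" and "C \<noteq> {}"
proof -
  obtain c0 c1 where "c0 \<in> C" "hamming {1..n} c0 c1 = d"
    using assms unfolding min_dist_eq_def by blast
  moreover have "hamming {1..n} c0 c1 \<le> card {1..n}"
    unfolding hamming_def by (rule card_mono) auto
  ultimately show "d \<le> n" and "C \<noteq> {}" by auto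
qed

lemma log_le_ceiling_mult_log_of_pow_le:
  fixes b q :: real and c d n N :: nat
  assumes "real c ^ N \<le> b ^ (n - d + N)" and "c > 0" and "b \<ge> 1" and "q > 1"
    and "N > 0" and "d \<le> n"
  shows "log q c \<le> real_of_int (\<lceil>(real n - (real d - 1)) / real N\<rceil> + 1) * log q b"
proof -
  have "log q (real c ^ N) \<le> log q (b ^ (n - d + N))"
    using assms(1-4) by (subst log_le_cancel_iff) auto
  then have "real N * log q c \<le> real (n - d + N) * log q b"
    using assms(2,3) by (simp add: log_nat_power)
  then have "log q c \<le> real (n - d + N) / real N * log q b"
    using assms(5) by (simp add: field_simps)
  also have "real (n - d + N) / real N = (real n - (real d - 1)) / real N + (real N - 1) / real N"
    using assms(5,6) by (simp add: field_simps of_nat_diff)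
  also have "\<dots> * log q b \<le> real_of_int (\<lceil>(real n - (real d - 1)) / real N\<rceil> + 1) * log q b"
    unfolding of_int_add of_int_1 using assms(3-5)
    by (intro mult_right_mono add_mono le_of_int_ceiling) auto
  finally show ?thesis .
qed

theorem theorem1:
  fixes Q :: "'a set" and q n r \<rho> d :: nat and B :: "nat \<Rightarrow> real"
    and C :: "(nat \<Rightarrow> 'a) set"
  assumes "q \<ge> 2" and "finite Q" and "card Q = q"
    and "r \<ge> 1" and "\<rho> \<ge> 2" and "d \<ge> 1"
    and B_bound: "\<And>l D. is_code Q l D \<Longrightarrow> min_dist_ge {1..l} D \<rho> \<Longrightarrow> real (card D) \<le> B l"
    and B0: "B 0 = 1"
    and B_lc: "log_convex B"
    and code: "is_code Q n C"
    and loc: "has_locality n C r \<rho>"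
    and dist: "min_dist_eq {1..n} C d"
  shows "log q (card C) \<le>
     real_of_int (\<lceil>(real n - (real d - 1)) / real (r + \<rho> - 1)\<rceil> + 1) * log q (B (r + \<rho> - 1))"
proof -
  define N where "N = r + \<rho> - 1"
  have "N \<ge> 2" using assms(4,5) by (simp add: N_def)
  have bound: "code_size_bound Q \<rho> B" using B_bound unfolding code_size_bound_def by blast
  have "B N \<ge> 1" using assms(1,3) by (intro bound_ge_one[OF _ bound]) auto
  have "d \<le> n" and "C \<noteq> {}" using min_dist_eq_imp_le_length[OF dist] by auto
  have "card C > 0"
    using \<open>C \<noteq> {}\<close> code \<open>finite Q\<close> unfolding is_code_def
    by (metis card_gt_0_iff finite_PiE finite_atLeastAtMost finite_subset)
  have "n - d + 1 \<le> n" using \<open>d \<le> n\<close> \<open>d \<ge> 1\<close> by simp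
  from exists_coordinate_set_bounded_proj[OF \<open>finite Q\<close> code loc N_def bound
        log_convex_pow_le[OF B_lc B0] this]
  obtain U where U: "U \<subseteq> {1..n}" "n - d + 1 \<le> card U" "card U \<le> n - d + 1 + N - 1"
      "real (card (proj C U)) ^ N \<le> B N ^ card U"
    by blast
  have "card (proj C U) = card C"
    unfolding proj_def using dist U(2) \<open>d \<le> n\<close>
    by (intro card_image inj_on_restrict_if_min_dist_ge[OF _ U(1), of C d])
      (auto simp: min_dist_eq_def)
  then have "real (card C) ^ N \<le> B N ^ card U" using U(4) by simp
  also have "\<dots> \<le> B N ^ (n - d + N)"
    using U(3) \<open>N \<ge> 2\<close> \<open>B N \<ge> 1\<close> by (intro power_increasing) auto
  finally show ?thesis
    unfolding N_def[symmetric] using \<open>card C > 0\<close> \<open>B N \<ge> 1\<close> assms(1) \<open>N \<ge> 2\<close> \<open>d \<le> n\<close>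
    by (intro log_le_ceiling_mult_log_of_pow_le) auto
qed

end
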